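(* Let $n,g$ be integers with $0\leq g\leq \left\lfloor \frac{n-3}{2}\right\rfloor$, and let $G$ be a connected graph of order $n$ which has a $g$-good-neighbor cut. Then $$1\leq \kappa^g(G)\leq n-2g-2.$$ Moreover, the upper and lower bounds are sharp (each is attained with equality by some such graph).
   Context: Let $G=(V,E)$ be a connected graph and $g\ge 0$ an integer. A set $F\subseteq V$ is a $g$-good-neighbor faulty set if $|N(v)\cap (V-F)|\geq g$ for every vertex $v\in V-F$ (equivalently, every component of $G-F$ has minimum degree at least $g$). A $g$-good-neighbor cut of $G$ is a $g$-good-neighbor faulty set $F$ such that $G-F$ is disconnected. The $g$-good-neighbor connectivity $\kappa^g(G)$ is the minimum cardinality of a $g$-good-neighbor cut of $G$; it is defined only when $G$ has at least one $g$-good-neighbor cut. *)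

theory Defs
  imports Main
begin

definition simple_graph :: "'a set \<Rightarrow> ('a \<Rightarrow> 'a \<Rightarrow> bool) \<Rightarrow> bool" where
  "simple_graph V E \<longleftrightarrow> finite V \<and> (\<forall>u v. E u v \<longrightarrow> u \<in> V \<and> v \<in> V)
     \<and> (\<forall>u v. E u v \<longrightarrow> E v u) \<and> (\<forall>v. \<not> E v v)"

definition nbhd :: "'a set \<Rightarrow> ('a \<Rightarrow> 'a \<Rightarrow> bool) \<Rightarrow> 'a \<Rightarrow> 'a set" where
  "nbhd V E v = {u \<in> V. E v u}"

definition connected_on :: "('a \<Rightarrow> 'a \<Rightarrow> bool) \<Rightarrow> 'a set \<Rightarrow> bool" where
  "connected_on E S \<longleftrightarrow> S \<noteq> {} \<and>
     (\<forall>u\<in>S. \<forall>v\<in>S. (\<lambda>x y. E x y \<and> x \<in> S \<and> y \<in> S)\<^sup>*\<^sup>* u v)"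

definition connected_graph :: "'a set \<Rightarrow> ('a \<Rightarrow> 'a \<Rightarrow> bool) \<Rightarrow> bool" where
  "connected_graph V E \<longleftrightarrow> simple_graph V E \<and> connected_on E V"

definition good_neighbor_faulty :: "'a set \<Rightarrow> ('a \<Rightarrow> 'a \<Rightarrow> bool) \<Rightarrow> nat \<Rightarrow> 'a set \<Rightarrow> bool" where
  "good_neighbor_faulty V E g F \<longleftrightarrow> F \<subseteq> V \<and>
     (\<forall>v \<in> V - F. card (nbhd V E v \<inter> (V - F)) \<ge> g)"

text \<open>G - F disconnected: at least two components, i.e. nonempty and not connected.\<close>
definition good_neighbor_cut :: "'a set \<Rightarrow> ('a \<Rightarrow> 'a \<Rightarrow> bool) \<Rightarrow> nat \<Rightarrow> 'a set \<Rightarrow> bool" where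
  "good_neighbor_cut V E g F \<longleftrightarrow> good_neighbor_faulty V E g F \<and>
     V - F \<noteq> {} \<and> \<not> connected_on E (V - F)"

definition gn_connectivity :: "'a set \<Rightarrow> ('a \<Rightarrow> 'a \<Rightarrow> bool) \<Rightarrow> nat \<Rightarrow> nat" where
  "gn_connectivity V E g = (LEAST k. \<exists>F. good_neighbor_cut V E g F \<and> card F = k)"

end

theory Submission
  imports Defs
begin

text \<open>Lower bound: a cut F of a connected graph is nonempty, and since every vertex of G - F has
  at least g neighbours in G - F, each component of G - F has at least g + 1 vertices; as there
  are at least two components, |V - F| \<ge> 2g + 2. Sharpness: delete from the complete graph on V
  all edges between two disjoint sets A and B with |A|, |B| \<ge> g + 1. The remaining vertices are
  adjacent to everything, so they lie in every cut, and they form a cut themselves; hence the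
  g-good-neighbor connectivity is |V - A - B|, which can be any value between 1 and n - 2g - 2.\<close>

definition component :: "('a \<Rightarrow> 'a \<Rightarrow> bool) \<Rightarrow> 'a set \<Rightarrow> 'a \<Rightarrow> 'a set" where
  "component E S x = {y \<in> S. (\<lambda>u v. E u v \<and> u \<in> S \<and> v \<in> S)\<^sup>*\<^sup>* x y}"

lemma card_component_ge:
  assumes "finite S" and "x \<in> S" and "\<not> E x x" and "g \<le> card (nbhd V E x \<inter> S)"
  shows "g + 1 \<le> card (component E S x)"
proof -
  have "insert x (nbhd V E x \<inter> S) \<subseteq> component E S x"
    using assms(2) unfolding component_def nbhd_def by auto
  then have "card (insert x (nbhd V E x \<inter> S)) \<le> card (component E S x)"
    by (rule card_mono[rotated]) (simp add: component_def assms(1))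
  moreover have "x \<notin> nbhd V E x \<inter> S"
    using assms(3) unfolding nbhd_def by auto
  ultimately show ?thesis
    using assms(1,4) by simp
qed

lemma components_disjoint_if_unreachable:
  assumes "\<And>u v. E u v \<Longrightarrow> E v u"
    and "\<not> (\<lambda>u v. E u v \<and> u \<in> S \<and> v \<in> S)\<^sup>*\<^sup>* x y"
  shows "component E S x \<inter> component E S y = {}"
proof -
  let ?R = "\<lambda>u v. E u v \<and> u \<in> S \<and> v \<in> S"
  have "symp ?R\<^sup>*\<^sup>*"
    using assms(1) by (intro symp_rtranclp) (auto intro: sympI)
  then show ?thesis
    using assms(2) unfolding component_def
    by (auto dest: sympD intro: rtranclp_trans)
qed

lemma card_ge_if_not_connected_on:
  assumes "simple_graph V E" and "S \<subseteq> V" and "S \<noteq> {}" and "\<not> connected_on E S"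
    and "\<forall>v \<in> S. g \<le> card (nbhd V E v \<inter> S)"
  shows "2 * g + 2 \<le> card S"
proof -
  have fin: "finite S"
    using assms(1,2) finite_subset unfolding simple_graph_def by blast
  from assms(3,4) obtain x y where xy: "x \<in> S" "y \<in> S"
    and unreachable: "\<not> (\<lambda>u v. E u v \<and> u \<in> S \<and> v \<in> S)\<^sup>*\<^sup>* x y"
    unfolding connected_on_def by blast
  have "g + 1 \<le> card (component E S v)" if "v \<in> S" for v
    using assms(1,5) fin that by (intro card_component_ge) (auto simp: simple_graph_def)
  then have "g + 1 \<le> card (component E S x)" and "g + 1 \<le> card (component E S y)"
    using xy by auto
  moreover have "card (component E S x \<union> component E S y)
      = card (component E S x) + card (component E S y)"
    using fin assms(1) components_disjoint_if_unreachable[OF _ unreachable]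
    by (intro card_Un_disjoint) (auto simp: component_def simple_graph_def)
  moreover have "card (component E S x \<union> component E S y) \<le> card S"
    using fin by (intro card_mono) (auto simp: component_def)
  ultimately show ?thesis
    by linarith
qed

lemma good_neighbor_cut_card_bounds:
  assumes "connected_graph V E" and "good_neighbor_cut V E g F"
  shows "1 \<le> card F" and "card F + 2 * g + 2 \<le> card V"
proof -
  have sg: "simple_graph V E" and "connected_on E V"
    using assms(1) unfolding connected_graph_def by auto
  have FV: "F \<subseteq> V" and "V - F \<noteq> {}" and disconnected: "\<not> connected_on E (V - F)"
    and "\<forall>v \<in> V - F. g \<le> card (nbhd V E v \<inter> (V - F))"
    using assms(2) unfolding good_neighbor_cut_def good_neighbor_faulty_def by auto
  then have "2 * g + 2 \<le> card (V - F)"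
    using sg by (intro card_ge_if_not_connected_on) auto
  moreover have fin: "finite F"
    using FV sg finite_subset unfolding simple_graph_def by blast
  ultimately show "card F + 2 * g + 2 \<le> card V"
    using FV by (simp add: card_Diff_subset card_mono)
  have "F \<noteq> {}"
    using disconnected \<open>connected_on E V\<close> by auto
  then show "1 \<le> card F"
    using fin by (simp add: Suc_le_eq card_gt_0_iff)
qed

lemma gn_connectivity_attained:
  assumes "\<exists>F. good_neighbor_cut V E g F"
  shows "\<exists>F. good_neighbor_cut V E g F \<and> card F = gn_connectivity V E g"
  unfolding gn_connectivity_def
  using LeastI_ex[of "\<lambda>k. \<exists>F. good_neighbor_cut V E g F \<and> card F = k"] assms by blast

lemma gn_connectivity_bounds:
  assumes "connected_graph V E" and "\<exists>F. good_neighbor_cut V E g F"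
  shows "1 \<le> gn_connectivity V E g" and "gn_connectivity V E g + 2 * g + 2 \<le> card V"
  using gn_connectivity_attained[OF assms(2)] good_neighbor_cut_card_bounds[OF assms(1)]
  by metis+

lemma gn_connectivity_eqI:
  assumes "good_neighbor_cut V E g F"
    and "\<And>F'. good_neighbor_cut V E g F' \<Longrightarrow> card F \<le> card F'"
  shows "gn_connectivity V E g = card F"
  unfolding gn_connectivity_def
  by (rule Least_equality) (use assms in auto)

lemma connected_on_if_universal_vertex:
  assumes "c \<in> S" and "\<And>x. x \<in> S \<Longrightarrow> x \<noteq> c \<Longrightarrow> E x c \<and> E c x"
  shows "connected_on E S"
proof -
  let ?R = "\<lambda>u v. E u v \<and> u \<in> S \<and> v \<in> S"
  have "?R\<^sup>*\<^sup>* x c" and "?R\<^sup>*\<^sup>* c x" if "x \<in> S" for x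
    using assms that by (cases "x = c"; auto)+
  then show ?thesis
    unfolding connected_on_def using assms(1) by (blast intro: rtranclp_trans)
qed

lemma universal_vertex_mem_cut:
  assumes "good_neighbor_cut V E g F" and "c \<in> V"
    and "\<And>x. x \<in> V \<Longrightarrow> x \<noteq> c \<Longrightarrow> E x c \<and> E c x"
  shows "c \<in> F"
proof (rule ccontr)
  assume "c \<notin> F"
  then have "connected_on E (V - F)"
    using assms(2,3) by (intro connected_on_if_universal_vertex[of c]) auto
  then show False
    using assms(1) unfolding good_neighbor_cut_def by blast
qed

definition complete_minus_biclique :: "'a set \<Rightarrow> 'a set \<Rightarrow> 'a set \<Rightarrow> 'a \<Rightarrow> 'a \<Rightarrow> bool" where
  "complete_minus_biclique V A B u v \<longleftrightarrow> u \<in> V \<and> v \<in> V \<and> u \<noteq> v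
     \<and> \<not> (u \<in> A \<and> v \<in> B) \<and> \<not> (u \<in> B \<and> v \<in> A)"

context
  fixes V A B :: "'a set" and g :: nat
  assumes fin: "finite V" and AV: "A \<subseteq> V" and BV: "B \<subseteq> V" and AB: "A \<inter> B = {}"
    and rest: "V - A - B \<noteq> {}" and cardA: "g + 1 \<le> card A" and cardB: "g + 1 \<le> card B"
begin

private lemma universal:
  assumes "c \<in> V - A - B" and "x \<in> V" and "x \<noteq> c"
  shows "complete_minus_biclique V A B x c \<and> complete_minus_biclique V A B c x"
  using assms unfolding complete_minus_biclique_def by auto

lemma connected_graph_complete_minus_biclique:
  "connected_graph V (complete_minus_biclique V A B)"
proof -
  obtain c where "c \<in> V - A - B"
    using rest by blast
  then have "connected_on (complete_minus_biclique V A B) V"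
    using universal by (intro connected_on_if_universal_vertex[of c]) auto
  moreover have "simple_graph V (complete_minus_biclique V A B)"
    using fin unfolding simple_graph_def complete_minus_biclique_def by auto
  ultimately show ?thesis
    unfolding connected_graph_def by blast
qed

private lemma card_nbhd_ge:
  assumes "X \<in> {A, B}" and "v \<in> X"
  shows "g \<le> card (nbhd V (complete_minus_biclique V A B) v \<inter> (A \<union> B))"
proof -
  have "X - {v} \<subseteq> nbhd V (complete_minus_biclique V A B) v \<inter> (A \<union> B)"
    using assms AV BV AB unfolding nbhd_def complete_minus_biclique_def by auto
  then have "card (X - {v}) \<le> card (nbhd V (complete_minus_biclique V A B) v \<inter> (A \<union> B))"
    using fin by (intro card_mono) (auto simp: nbhd_def)
  moreover have "finite X"
    using assms(1) AV BV fin finite_subset by blast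
  ultimately show ?thesis
    using assms cardA cardB by auto
qed

private lemma reachable_from_A_in_A:
  assumes "(\<lambda>x y. complete_minus_biclique V A B x y \<and> x \<in> A \<union> B \<and> y \<in> A \<union> B)\<^sup>*\<^sup>* a y"
    and "a \<in> A"
  shows "y \<in> A"
  using assms by induction (auto simp: complete_minus_biclique_def)

lemma good_neighbor_cut_complete_minus_biclique:
  "good_neighbor_cut V (complete_minus_biclique V A B) g (V - A - B)"
proof -
  have remaining: "V - (V - A - B) = A \<union> B"
    using AV BV by blast
  obtain a b where "a \<in> A" "b \<in> B"
    using cardA cardB by fastforce
  then have "\<not> (\<lambda>x y. complete_minus_biclique V A B x y \<and> x \<in> A \<union> B \<and> y \<in> A \<union> B)\<^sup>*\<^sup>* a b"
    using reachable_from_A_in_A AB by blast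
  then have "\<not> connected_on (complete_minus_biclique V A B) (A \<union> B)"
    unfolding connected_on_def using \<open>a \<in> A\<close> \<open>b \<in> B\<close> by blast
  moreover have "\<forall>v \<in> A \<union> B. g \<le> card (nbhd V (complete_minus_biclique V A B) v \<inter> (A \<union> B))"
    using card_nbhd_ge by blast
  ultimately show ?thesis
    unfolding good_neighbor_cut_def good_neighbor_faulty_def remaining
    using \<open>a \<in> A\<close> by blast
qed

lemma gn_connectivity_complete_minus_biclique:
  "gn_connectivity V (complete_minus_biclique V A B) g = card (V - A - B)"
proof (rule gn_connectivity_eqI[OF good_neighbor_cut_complete_minus_biclique])
  fix F assume cut: "good_neighbor_cut V (complete_minus_biclique V A B) g F"
  have "V - A - B \<subseteq> F"
  proof
    fix c assume "c \<in> V - A - B"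
    then show "c \<in> F"
      using universal by (intro universal_vertex_mem_cut[OF cut]) auto
  qed
  moreover have "F \<subseteq> V"
    using cut unfolding good_neighbor_cut_def good_neighbor_faulty_def by blast
  ultimately show "card (V - A - B) \<le> card F"
    using fin by (meson card_mono finite_subset)
qed

end

lemma gn_connectivity_realizable:
  assumes "1 \<le> k" and "k + 2 * g + 2 \<le> N"
  shows "\<exists>E. connected_graph {..<N} E \<and> (\<exists>F. good_neighbor_cut {..<N} E g F)
    \<and> gn_connectivity {..<N} E g = k"
proof -
  define A B where "A = {k..<k + g + 1}" and "B = {k + g + 1..<N}"
  have rest: "{..<N} - A - B = {..<k}"
    using assms unfolding A_def B_def by auto
  have "A \<subseteq> {..<N}" "B \<subseteq> {..<N}" "A \<inter> B = {}" "{..<N} - A - B \<noteq> {}"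
    "g + 1 \<le> card A" "g + 1 \<le> card B"
    using assms unfolding rest unfolding A_def B_def by (auto simp: lessThan_empty_iff)
  note graph_facts = finite_lessThan this
  have "connected_graph {..<N} (complete_minus_biclique {..<N} A B)"
    and "good_neighbor_cut {..<N} (complete_minus_biclique {..<N} A B) g {..<k}"
    and "gn_connectivity {..<N} (complete_minus_biclique {..<N} A B) g = k"
    using connected_graph_complete_minus_biclique[OF graph_facts]
      good_neighbor_cut_complete_minus_biclique[OF graph_facts]
      gn_connectivity_complete_minus_biclique[OF graph_facts]
    unfolding rest by simp_all
  then show ?thesis
    by blast
qed

theorem corollary2p1:
  fixes n g :: int
  assumes "0 \<le> g" and "g \<le> (n - 3) div 2"
  shows "(\<forall>(V :: 'a set) E. connected_graph V E \<and> int (card V) = n \<and>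
            (\<exists>F. good_neighbor_cut V E (nat g) F) \<longrightarrow>
            1 \<le> int (gn_connectivity V E (nat g)) \<and>
            int (gn_connectivity V E (nat g)) \<le> n - 2 * g - 2)
       \<and> (\<exists>(V :: nat set) E. connected_graph V E \<and> int (card V) = n \<and>
            (\<exists>F. good_neighbor_cut V E (nat g) F) \<and> gn_connectivity V E (nat g) = 1)
       \<and> (\<exists>(V :: nat set) E. connected_graph V E \<and> int (card V) = n \<and>
            (\<exists>F. good_neighbor_cut V E (nat g) F) \<and>
            int (gn_connectivity V E (nat g)) = n - 2 * g - 2)"
proof -
  define N where "N = nat n"
  have g: "g = int (nat g)" and n: "n = int N" and room: "2 * nat g + 3 \<le> N"
    using assms unfolding N_def by linarith+
  have "1 \<le> int (gn_connectivity V E (nat g)) \<and> int (gn_connectivity V E (nat g)) \<le> n - 2 * g - 2"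
    if "connected_graph V E" "int (card V) = n" "\<exists>F. good_neighbor_cut V E (nat g) F"
    for V :: "'a set" and E
    using gn_connectivity_bounds[OF that(1,3)] that(2) g by linarith
  moreover obtain E1 where "connected_graph {..<N} E1" "\<exists>F. good_neighbor_cut {..<N} E1 (nat g) F"
    "gn_connectivity {..<N} E1 (nat g) = 1"
    using gn_connectivity_realizable[of 1 "nat g" N] room by auto
  moreover obtain E2 where "connected_graph {..<N} E2" "\<exists>F. good_neighbor_cut {..<N} E2 (nat g) F"
    "gn_connectivity {..<N} E2 (nat g) = N - 2 * nat g - 2"
  proof -
    have "1 \<le> N - 2 * nat g - 2" and "(N - 2 * nat g - 2) + 2 * nat g + 2 \<le> N"
      using room by linarith+
    then show thesis
      using gn_connectivity_realizable that by blast
  qed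
  moreover have "int (N - 2 * nat g - 2) = n - 2 * g - 2"
    using n g room by linarith
  ultimately show ?thesis
    using n by (intro conjI exI[of _ "{..<N}"]) auto
qed

end
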